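(* Let $X$ be a countable infinite set, $\mathcal{I}$ a hereditarily meager ideal on $X$, and $\tau$ an $\mathcal{I}$-crowded topology on $X$ with $w(\tau)<\mathfrak{m}_c$. Suppose $A\subseteq X$ is $(\mathcal{I},\tau)$-crowded. Then there is a partition $A=\bigcup_{m\in\omega}A_m$ such that each $A_m$ is $(\mathcal{I},\tau)$-crowded and dense in $A$.
   Context: An ideal on $X$ is a family of subsets of $X$ closed under subsets and finite unions; all ideals are assumed proper ($X\notin\mathcal{I}$) and free (every finite subset of $X$ is in $\mathcal{I}$). $\mathcal{I}^+=\mathcal{P}(X)\setminus\mathcal{I}$. Subsets of $X$ are identified with points of $2^X$ (product topology). $\mathcal{I}$ is hereditarily meager (HM) if for every $A\in\mathcal{I}^+$, $\mathcal{I}\cap\mathcal{P}(A)$ is meager in $2^A$. A topology $\tau$ on $X$ is $\mathcal{I}$-crowded if $\tau\cap\mathcal{I}=\{\emptyset\}$. A set $A\subseteq X$ is $(\mathcal{I},\tau)$-crowded if for every $U\in\tau$, $A\cap U$ is either empty or belongs to $\mathcal{I}^+$. $\mathfrak{m}_c$ is the least cardinal $\kappa$ such that Martin's Axiom MA$(\kappa)$ for countable posets fails. $w$ denotes weight. *)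

theory Defs
  imports "HOL-Analysis.Analysis"
begin

definition is_ideal_on :: "'a set \<Rightarrow> 'a set set \<Rightarrow> bool" where
  "is_ideal_on X I \<longleftrightarrow>
     I \<subseteq> Pow X \<and>
     (\<forall>A\<in>I. \<forall>B. B \<subseteq> A \<longrightarrow> B \<in> I) \<and>
     (\<forall>A\<in>I. \<forall>B\<in>I. A \<union> B \<in> I) \<and>
     X \<notin> I \<and>
     (\<forall>F. F \<subseteq> X \<and> finite F \<longrightarrow> F \<in> I)"

definition nowhere_dense_in :: "'x topology \<Rightarrow> 'x set \<Rightarrow> bool" where
  "nowhere_dense_in T S \<longleftrightarrow> S \<subseteq> topspace T \<and> T interior_of (T closure_of S) = {}"

definition meager_in :: "'x topology \<Rightarrow> 'x set \<Rightarrow> bool" where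
  "meager_in T S \<longleftrightarrow> S \<subseteq> topspace T \<and>
     (\<exists>N :: nat \<Rightarrow> 'x set. (\<forall>n. nowhere_dense_in T (N n)) \<and> S \<subseteq> (\<Union>n. N n))"

text \<open>The Cantor cube \<open>2^A\<close> with the product topology; a subset \<open>S \<subseteq> A\<close> is
  identified with its characteristic function restricted to \<open>A\<close>.\<close>
definition cantor_cube :: "'a set \<Rightarrow> ('a \<Rightarrow> bool) topology" where
  "cantor_cube A = product_topology (\<lambda>_. discrete_topology (UNIV :: bool set)) A"

definition char_point :: "'a set \<Rightarrow> 'a set \<Rightarrow> ('a \<Rightarrow> bool)" where
  "char_point A S = restrict (\<lambda>x. x \<in> S) A"

definition hereditarily_meager :: "'a set \<Rightarrow> 'a set set \<Rightarrow> bool" where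
  "hereditarily_meager X I \<longleftrightarrow>
     (\<forall>A. A \<subseteq> X \<and> A \<notin> I \<longrightarrow> meager_in (cantor_cube A) (char_point A ` (I \<inter> Pow A)))"

definition ideal_crowded_topology :: "'a set set \<Rightarrow> 'a topology \<Rightarrow> bool" where
  "ideal_crowded_topology I T \<longleftrightarrow> (\<forall>U. openin T U \<and> U \<in> I \<longrightarrow> U = {})"

definition ideal_top_crowded :: "'a set set \<Rightarrow> 'a topology \<Rightarrow> 'a set \<Rightarrow> bool" where
  "ideal_top_crowded I T A \<longleftrightarrow> (\<forall>U. openin T U \<longrightarrow> A \<inter> U = {} \<or> A \<inter> U \<notin> I)"

text \<open>Countable posets are represented (up to isomorphism) on a carrier \<open>P \<subseteq> nat\<close>.\<close>
definition partial_order_on_set :: "nat set \<Rightarrow> (nat \<Rightarrow> nat \<Rightarrow> bool) \<Rightarrow> bool" where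
  "partial_order_on_set P le \<longleftrightarrow>
     (\<forall>p\<in>P. le p p) \<and>
     (\<forall>p\<in>P. \<forall>q\<in>P. le p q \<and> le q p \<longrightarrow> p = q) \<and>
     (\<forall>p\<in>P. \<forall>q\<in>P. \<forall>r\<in>P. le p q \<and> le q r \<longrightarrow> le p r)"

definition dense_in_poset :: "nat set \<Rightarrow> (nat \<Rightarrow> nat \<Rightarrow> bool) \<Rightarrow> nat set \<Rightarrow> bool" where
  "dense_in_poset P le D \<longleftrightarrow> D \<subseteq> P \<and> (\<forall>p\<in>P. \<exists>q\<in>D. le q p)"

definition filter_in_poset :: "nat set \<Rightarrow> (nat \<Rightarrow> nat \<Rightarrow> bool) \<Rightarrow> nat set \<Rightarrow> bool" where
  "filter_in_poset P le G \<longleftrightarrow> G \<subseteq> P \<and> G \<noteq> {} \<and>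
     (\<forall>p\<in>G. \<forall>q\<in>P. le p q \<longrightarrow> q \<in> G) \<and>
     (\<forall>p\<in>G. \<forall>q\<in>G. \<exists>r\<in>G. le r p \<and> le r q)"

text \<open>\<open>MA_countable K\<close>: MA(\<kappa>) for countable posets, where \<kappa> = |K|.\<close>
definition MA_countable :: "'b set \<Rightarrow> bool" where
  "MA_countable K \<longleftrightarrow>
     (\<forall>P le (D :: 'b \<Rightarrow> nat set). P \<noteq> {} \<and> partial_order_on_set P le \<and>
        (\<forall>k\<in>K. dense_in_poset P le (D k)) \<longrightarrow>
        (\<exists>G. filter_in_poset P le G \<and> (\<forall>k\<in>K. G \<inter> D k \<noteq> {})))"

definition is_base_of :: "'a topology \<Rightarrow> 'a set set \<Rightarrow> bool" where
  "is_base_of T B \<longleftrightarrow> openin T = arbitrary union_of (\<lambda>V. V \<in> B)"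

text \<open>\<open>w(T) < m_c\<close>, where m_c is the least cardinal \<kappa> for which MA(\<kappa>) for countable
  posets fails: i.e. MA(\<kappa>) holds for every cardinal \<kappa> \<le> w(T), where \<kappa> \<le> w(T) means
  \<kappa> is at most the cardinality of every base.  Since w(T) \<le> |Pow X|, all such \<kappa>
  are represented by sets \<open>K :: 'a set set\<close>.\<close>
definition weight_below_mc :: "'a topology \<Rightarrow> bool" where
  "weight_below_mc T \<longleftrightarrow>
     (\<forall>K :: 'a set set. (\<forall>B. is_base_of T B \<longrightarrow> (card_of K, card_of B) \<in> ordLeq) \<longrightarrow> MA_countable K)"

end

theory Submission
  imports Defs
begin

unbundle cardinal_syntax

text \<open>Colour the points of \<open>A\<close> by natural numbers, forcing with finite partial colourings.
  For a basic open set \<open>V\<close> meeting \<open>A\<close>, the set \<open>A \<inter> V\<close> is \<open>\<I>\<close>-positive, so by hereditary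
  meagerness \<open>\<I> \<inter> \<P>(A \<inter> V)\<close> is covered by countably many nowhere dense sets \<open>N\<^sub>n\<close> of \<open>2\<^bsup>A \<inter> V\<^esup>\<close>.
  Every finite colouring extends to one whose \<open>m\<close>-th colour class, viewed as a point of
  \<open>2\<^bsup>A \<inter> V\<^esup>\<close>, is forced to avoid \<open>N\<^sub>n\<close>. These are \<open>w(\<tau>)\<close> many dense requirements on a countable
  poset, so MA for countable posets yields a generic colouring; its colour classes then meet every
  basic \<open>V\<close> with \<open>A \<inter> V \<noteq> {}\<close> in an \<open>\<I>\<close>-positive set, i.e. they are \<open>(\<I>,\<tau>)\<close>-crowded and dense in \<open>A\<close>.\<close>

lemma is_base_of_iff:
  "is_base_of T B \<longleftrightarrow>
     (\<forall>V\<in>B. openin T V) \<and> (\<forall>U x. openin T U \<and> x \<in> U \<longrightarrow> (\<exists>V\<in>B. x \<in> V \<and> V \<subseteq> U))"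
  unfolding is_base_of_def openin_topology_base_unique by blast

lemma is_ideal_on_subset: "is_ideal_on X I \<Longrightarrow> S \<in> I \<Longrightarrow> S' \<subseteq> S \<Longrightarrow> S' \<in> I"
  unfolding is_ideal_on_def by blast

text \<open>A poset of sets is ordered by reverse inclusion, so stronger conditions are larger sets.\<close>

definition cofinal_in :: "'c set set \<Rightarrow> 'c set set \<Rightarrow> bool" where
  "cofinal_in P D \<longleftrightarrow> D \<subseteq> P \<and> (\<forall>s\<in>P. \<exists>t\<in>D. s \<subseteq> t)"

definition union_directed :: "'c set set \<Rightarrow> bool" where
  "union_directed G \<longleftrightarrow> (\<forall>a\<in>G. \<forall>b\<in>G. \<exists>c\<in>G. a \<union> b \<subseteq> c)"

lemma exists_generic_countably_many:
  fixes P :: "'c set set" and D :: "'j \<Rightarrow> 'c set set"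
  assumes J: "countable J" and s0: "s0 \<in> P" and cof: "\<forall>j\<in>J. cofinal_in P (D j)"
  shows "\<exists>G\<subseteq>P. union_directed G \<and> (\<forall>j\<in>J. G \<inter> D j \<noteq> {})"
proof (cases "J = {}")
  case True
  then show ?thesis using s0 by (intro exI[of _ "{s0}"]) (auto simp: union_directed_def)
next
  case False
  define e where "e = from_nat_into J"
  have eJ: "e n \<in> J" for n using False e_def from_nat_into by metis
  have "\<forall>n s. \<exists>t. s \<in> P \<longrightarrow> t \<in> D (e n) \<and> s \<subseteq> t"
    using cof eJ unfolding cofinal_in_def by blast
  then obtain ext where ext: "\<And>n s. s \<in> P \<Longrightarrow> ext n s \<in> D (e n) \<and> s \<subseteq> ext n s"
    by metis
  define p where "p = rec_nat s0 ext"
  have extP: "ext n s \<in> P" if "s \<in> P" for n s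
    using ext[OF that] cof eJ unfolding cofinal_in_def by blast
  have pP: "p n \<in> P" and pD: "p (Suc n) \<in> D (e n)" and pSuc: "p n \<subseteq> p (Suc n)" for n
  proof -
    show "p n \<in> P" using s0 extP by (induction n) (auto simp: p_def)
    then show "p (Suc n) \<in> D (e n)" "p n \<subseteq> p (Suc n)" using ext by (auto simp: p_def)
  qed
  have mono: "i \<le> j \<Longrightarrow> p i \<subseteq> p j" for i j using lift_Suc_mono_le[of p, OF pSuc] by blast
  have "union_directed (range p)"
    unfolding union_directed_def
  proof (intro ballI)
    fix a b assume "a \<in> range p" "b \<in> range p"
    then obtain i j where "a = p i" "b = p j" by auto
    then show "\<exists>c\<in>range p. a \<union> b \<subseteq> c"
      using mono[of i "max i j"] mono[of j "max i j"] by auto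
  qed
  moreover have "range p \<inter> D j \<noteq> {}" if "j \<in> J" for j
    using pD from_nat_into_surj[OF J that] unfolding e_def by blast
  ultimately show ?thesis using pP by blast
qed

lemma exists_generic_MA_countable:
  fixes P :: "'c set set" and K :: "'b set" and D :: "'b \<Rightarrow> 'c set set"
  assumes MA: "MA_countable K" and P: "countable P" and s0: "s0 \<in> P"
    and cof: "\<forall>k\<in>K. cofinal_in P (D k)"
  shows "\<exists>G\<subseteq>P. union_directed G \<and> (\<forall>k\<in>K. G \<inter> D k \<noteq> {})"
proof -
  define enc where "enc = to_nat_on P"
  define dec where "dec = from_nat_into P"
  have dec_enc: "\<And>s. s \<in> P \<Longrightarrow> dec (enc s) = s" unfolding enc_def dec_def using P by simp
  define le where "le a b \<longleftrightarrow> dec b \<subseteq> dec a" for a b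
  define DD where "DD k = enc ` D k" for k
  have "enc ` P \<noteq> {}" using s0 by auto
  moreover have "partial_order_on_set (enc ` P) le"
    unfolding partial_order_on_set_def
  proof (intro conjI ballI impI)
    fix p q assume "p \<in> enc ` P" "q \<in> enc ` P" "le p q \<and> le q p"
    then show "p = q" unfolding le_def using dec_enc by (metis image_iff subset_antisym)
  qed (auto simp: le_def)
  moreover have "dense_in_poset (enc ` P) le (DD k)" if "k \<in> K" for k
    unfolding dense_in_poset_def
  proof (intro conjI ballI)
    have cof_k: "cofinal_in P (D k)" using cof that by blast
    then show "DD k \<subseteq> enc ` P" unfolding cofinal_in_def DD_def by blast
    fix p assume "p \<in> enc ` P"
    then obtain s where "s \<in> P" "p = enc s" by blast
    moreover obtain t where "t \<in> D k" "s \<subseteq> t" "t \<in> P"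
      using cof_k \<open>s \<in> P\<close> unfolding cofinal_in_def by blast
    ultimately show "\<exists>q\<in>DD k. le q p" using dec_enc unfolding DD_def le_def by auto
  qed
  ultimately obtain H where H: "filter_in_poset (enc ` P) le H" "\<forall>k\<in>K. H \<inter> DD k \<noteq> {}"
    using MA[unfolded MA_countable_def, rule_format, of "enc ` P" le DD] by blast
  have "dec ` H \<subseteq> P" using H(1) dec_enc unfolding filter_in_poset_def by auto
  moreover have "union_directed (dec ` H)"
    unfolding union_directed_def
  proof (intro ballI)
    fix a b assume "a \<in> dec ` H" "b \<in> dec ` H"
    then obtain p q where "p \<in> H" "q \<in> H" "a = dec p" "b = dec q" by blast
    then obtain r where "r \<in> H" "le r p" "le r q" using H(1) unfolding filter_in_poset_def by blast
    then show "\<exists>c\<in>dec ` H. a \<union> b \<subseteq> c" using \<open>a = dec p\<close> \<open>b = dec q\<close> unfolding le_def by blast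
  qed
  moreover have "dec ` H \<inter> D k \<noteq> {}" if "k \<in> K" for k
  proof -
    obtain t where "t \<in> D k" "enc t \<in> H" using H(2) \<open>k \<in> K\<close> unfolding DD_def by blast
    moreover have "t \<in> P" using calculation cof \<open>k \<in> K\<close> unfolding cofinal_in_def by blast
    ultimately show ?thesis using dec_enc by (metis IntI empty_iff image_eqI)
  qed
  ultimately show ?thesis by blast
qed

lemma exists_minimal_base:
  fixes T :: "'a topology"
  obtains B0 where "is_base_of T B0" "\<And>B. is_base_of T B \<Longrightarrow> |B0| \<le>o |B|"
proof -
  let ?S = "{|B| | B. is_base_of T B}"
  have "is_base_of T {U. openin T U}" unfolding is_base_of_iff by auto
  then have "|{U. openin T U}| \<in> ?S" by blast
  then obtain z where z: "z \<in> ?S" "\<And>y. y <o z \<Longrightarrow> y \<notin> ?S"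
    by (rule wfE_min[OF wf_ordLess]) blast+
  then obtain B0 where B0: "is_base_of T B0" "z = |B0|" by blast
  have "|B0| \<le>o |B|" if "is_base_of T B" for B
    using z(2)[of "|B|"] B0(2) that not_ordLess_iff_ordLeq card_of_Well_order by blast
  with B0(1) show thesis by (rule that)
qed

lemma exists_generic_weight_below_mc:
  fixes T :: "'a topology" and P :: "'c set set" and D :: "'a set \<times> nat \<times> nat \<Rightarrow> 'c set set"
  assumes "weight_below_mc T" and B0: "is_base_of T B0" "\<And>B. is_base_of T B \<Longrightarrow> |B0| \<le>o |B|"
    and P: "countable P" and s0: "s0 \<in> P"
    and cof: "\<forall>j\<in>B0 \<times> UNIV \<times> UNIV. cofinal_in P (D j)"
  shows "\<exists>G\<subseteq>P. union_directed G \<and> (\<forall>j\<in>B0 \<times> UNIV \<times> UNIV. G \<inter> D j \<noteq> {})"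
proof (cases "finite B0")
  case True
  then show ?thesis using exists_generic_countably_many[OF _ s0 cof] by (simp add: countable_finite)
next
  case False
  let ?J = "B0 \<times> (UNIV :: nat set) \<times> (UNIV :: nat set)"
  have MA: "MA_countable B0" using assms(1) B0(2) unfolding weight_below_mc_def by blast
  have "|UNIV :: nat set| \<le>o |B0|" using False infinite_iff_card_of_nat by blast
  then have nat_pairs: "|UNIV \<times> UNIV :: (nat \<times> nat) set| \<le>o |B0|"
    using card_of_Times_same_infinite[of "UNIV :: nat set"] ordIso_ordLeq_trans by auto
  have "|?J| =o |B0|" using card_of_Times_infinite_simps(1)[OF False _ nat_pairs] by simp
  then have "|?J| \<le>o |B0|" using ordIso_iff_ordLeq by blast
  moreover have "?J \<noteq> {}" using False by auto
  ultimately have "\<exists>g. g ` B0 = ?J" using card_of_ordLeq2[of ?J B0] by simp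
  then obtain g where g: "g ` B0 = ?J" ..
  then have "\<forall>V\<in>B0. cofinal_in P (D (g V))" using cof by blast
  from exists_generic_MA_countable[OF MA P s0 this] obtain G where
    G: "G \<subseteq> P" "union_directed G" "\<forall>V\<in>B0. G \<inter> D (g V) \<noteq> {}"
    by blast
  have "\<forall>j\<in>?J. G \<inter> D j \<noteq> {}" unfolding g[symmetric] using G(3) by blast
  with G(1,2) show ?thesis by blast
qed

lemma topspace_cantor_cube: "topspace (cantor_cube B) = (\<Pi>\<^sub>E i\<in>B. UNIV)"
  unfolding cantor_cube_def by simp

text \<open>Partial colourings are single-valued relations \<open>s \<subseteq> A \<times> \<nat>\<close>, so that the union of a directed
  family of them is again one. Viewing points of \<open>2\<^bsup>B\<^esup>\<close> as subsets of \<open>B\<close>, \<open>colour_cylinder B m s\<close>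
  consists of those subsets that agree with the \<open>m\<close>-th colour class of \<open>s\<close> on the domain of \<open>s\<close>.\<close>

definition finite_colourings :: "'a set \<Rightarrow> ('a \<times> nat) set set" where
  "finite_colourings A = {s. finite s \<and> s \<subseteq> A \<times> UNIV \<and> single_valued s}"

definition colour_cylinder :: "'a set \<Rightarrow> nat \<Rightarrow> ('a \<times> nat) set \<Rightarrow> ('a \<Rightarrow> bool) set" where
  "colour_cylinder B m s = {y \<in> topspace (cantor_cube B). \<forall>(x,k)\<in>s. x \<in> B \<longrightarrow> y x = (k = m)}"

lemma countable_finite_colourings: "countable A \<Longrightarrow> countable (finite_colourings A)"
  unfolding finite_colourings_def
  by (rule countable_subset[OF _ countable_Collect_finite_subset[of "A \<times> UNIV"]]) auto

lemma openin_colour_cylinder: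
  assumes "finite s"
  shows "openin (cantor_cube B) (colour_cylinder B m s)"
  unfolding cantor_cube_def openin_product_topology_alt
proof
  fix y assume y: "y \<in> colour_cylinder B m s"
  define U where "U i = (if i \<in> Domain s then {y i} else UNIV)" for i
  have "finite {i \<in> B. U i \<noteq> topspace (discrete_topology UNIV)}"
    by (rule finite_subset[of _ "Domain s"]) (auto simp: U_def assms finite_Domain)
  moreover have "y \<in> Pi\<^sub>E B U" using y unfolding colour_cylinder_def topspace_cantor_cube U_def by auto
  moreover have "Pi\<^sub>E B U \<subseteq> colour_cylinder B m s"
  proof
    fix z assume z: "z \<in> Pi\<^sub>E B U"
    have "z x = y x" if "(x, k) \<in> s" "x \<in> B" for x k
      using z that unfolding U_def by (auto simp: PiE_iff Domain.DomainI)
    then show "z \<in> colour_cylinder B m s"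
      using y z unfolding colour_cylinder_def topspace_cantor_cube by (auto simp: PiE_iff)
  qed
  ultimately show "\<exists>U. finite {i \<in> B. U i \<noteq> topspace (discrete_topology UNIV)} \<and>
      (\<forall>i\<in>B. openin (discrete_topology UNIV) (U i)) \<and> y \<in> Pi\<^sub>E B U \<and> Pi\<^sub>E B U \<subseteq> colour_cylinder B m s"
    by auto
qed

lemma char_point_in_colour_cylinder:
  assumes "single_valued R" "s \<subseteq> R"
  shows "char_point B {x \<in> B. (x, m) \<in> R} \<in> colour_cylinder B m s"
proof -
  have "((x, m) \<in> R) = (k = m)" if "(x, k) \<in> s" for x k
    using assms that unfolding single_valued_def by blast
  then show ?thesis unfolding colour_cylinder_def topspace_cantor_cube char_point_def by auto
qed

lemma colour_cylinder_refine:
  assumes W: "openin (cantor_cube B) W" "y0 \<in> W" "y0 \<in> colour_cylinder B m s"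
    and s: "s \<in> finite_colourings A" and "B \<subseteq> A"
  shows "\<exists>t\<in>finite_colourings A. s \<subseteq> t \<and> colour_cylinder B m t \<subseteq> W"
proof -
  obtain U where U: "finite {i \<in> B. U i \<noteq> topspace (discrete_topology (UNIV :: bool set))}"
      "y0 \<in> Pi\<^sub>E B U" "Pi\<^sub>E B U \<subseteq> W"
    using W(1,2) unfolding cantor_cube_def openin_product_topology_alt by blast
  define F where "F = {i \<in> B. U i \<noteq> UNIV}"
  \<comment> \<open>colour the finitely many new coordinates of \<open>F\<close> so that the cylinder pins them to \<open>y0\<close>\<close>
  define t where "t = s \<union> (\<lambda>x. (x, if y0 x then m else Suc m)) ` (F - Domain s)"
  have "finite F" using U(1) unfolding F_def by simp
  then have "t \<in> finite_colourings A"
    using s \<open>B \<subseteq> A\<close> unfolding t_def F_def finite_colourings_def single_valued_def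
    by (auto simp: Domain.DomainI)
  moreover have "colour_cylinder B m t \<subseteq> Pi\<^sub>E B U"
  proof
    fix z assume z: "z \<in> colour_cylinder B m t"
    have "z i = y0 i" if "i \<in> F" for i
    proof (cases "i \<in> Domain s")
      case True
      then obtain k where "(i, k) \<in> s" by auto
      then show ?thesis
        using z W(3) that unfolding colour_cylinder_def t_def F_def by fastforce
    next
      case False
      then have "(i, if y0 i then m else Suc m) \<in> t" using that unfolding t_def by auto
      then have "z i = ((if y0 i then m else Suc m) = m)"
        using z that unfolding colour_cylinder_def F_def by fast
      then show ?thesis by (cases "y0 i") auto
    qed
    moreover have "z \<in> extensional B"
      using z unfolding colour_cylinder_def topspace_cantor_cube by (simp add: PiE_iff)
    ultimately show "z \<in> Pi\<^sub>E B U" using U(2) unfolding F_def PiE_iff by force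
  qed
  moreover have "s \<subseteq> t" unfolding t_def by blast
  ultimately show ?thesis using U(3) by blast
qed

lemma colour_cylinder_avoid_nowhere_dense:
  assumes N: "nowhere_dense_in (cantor_cube B) N" and s: "s \<in> finite_colourings A" and "B \<subseteq> A"
  shows "\<exists>t\<in>finite_colourings A. s \<subseteq> t \<and> colour_cylinder B m t \<inter> N = {}"
proof -
  let ?C = "cantor_cube B closure_of N"
  have fin: "finite s" and sv: "single_valued s" using s unfolding finite_colourings_def by auto
  have open_cyl: "openin (cantor_cube B) (colour_cylinder B m s)"
    using openin_colour_cylinder[OF fin] .
  have "\<not> colour_cylinder B m s \<subseteq> ?C"
  proof
    assume "colour_cylinder B m s \<subseteq> ?C"
    then have "colour_cylinder B m s \<subseteq> cantor_cube B interior_of ?C"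
      using open_cyl by (rule interior_of_maximal)
    then show False
      using N char_point_in_colour_cylinder[OF sv subset_refl] unfolding nowhere_dense_in_def by auto
  qed
  then obtain y0 where "y0 \<in> colour_cylinder B m s - ?C" by blast
  moreover have "openin (cantor_cube B) (colour_cylinder B m s - ?C)"
    using open_cyl by (intro openin_diff) auto
  ultimately obtain t where "t \<in> finite_colourings A" "s \<subseteq> t" "colour_cylinder B m t \<subseteq> colour_cylinder B m s - ?C"
    using colour_cylinder_refine[OF _ _ _ s \<open>B \<subseteq> A\<close>] by blast
  moreover have "N \<subseteq> ?C" using N unfolding nowhere_dense_in_def by (simp add: closure_of_subset)
  ultimately show ?thesis by blast
qed

lemma single_valued_Union_directed:
  assumes "union_directed G" "\<forall>s\<in>G. single_valued s"
  shows "single_valued (\<Union>G)"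
  unfolding single_valued_def
proof (intro allI impI)
  fix x y z assume "(x, y) \<in> \<Union>G" "(x, z) \<in> \<Union>G"
  then obtain a b where "a \<in> G" "b \<in> G" "(x, y) \<in> a" "(x, z) \<in> b" by blast
  moreover obtain c where "c \<in> G" "a \<union> b \<subseteq> c"
    using assms(1) calculation unfolding union_directed_def by blast
  ultimately show "y = z" using assms(2) unfolding single_valued_def by blast
qed

lemma exists_generic_colouring:
  fixes T :: "'a topology" and N :: "'a set \<Rightarrow> nat \<Rightarrow> ('a \<Rightarrow> bool) set"
  assumes "weight_below_mc T" and B0: "is_base_of T B0" "\<And>B. is_base_of T B \<Longrightarrow> |B0| \<le>o |B|"
    and "countable A"
    and N: "\<And>V n. V \<in> B0 \<Longrightarrow> A \<inter> V \<noteq> {} \<Longrightarrow> nowhere_dense_in (cantor_cube (A \<inter> V)) (N (A \<inter> V) n)"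
  shows "\<exists>R. single_valued R \<and> (\<forall>V\<in>B0. A \<inter> V \<noteq> {} \<longrightarrow>
           (\<forall>m::nat. \<forall>n. char_point (A \<inter> V) {x \<in> A \<inter> V. (x, m) \<in> R} \<notin> N (A \<inter> V) n))"
proof -
  define D where "D = (\<lambda>(V, m, n). {s \<in> finite_colourings A.
                         A \<inter> V = {} \<or> colour_cylinder (A \<inter> V) m s \<inter> N (A \<inter> V) n = {}})"
  have "cofinal_in (finite_colourings A) (D (V, m, n))" if "V \<in> B0" for V m n
  proof (cases "A \<inter> V = {}")
    case True
    then show ?thesis unfolding cofinal_in_def D_def by blast
  next
    case False
    have "\<exists>t\<in>finite_colourings A. s \<subseteq> t \<and> colour_cylinder (A \<inter> V) m t \<inter> N (A \<inter> V) n = {}"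
      if "s \<in> finite_colourings A" for s
      using colour_cylinder_avoid_nowhere_dense[OF N[OF \<open>V \<in> B0\<close> False] that Int_lower1] .
    then show ?thesis unfolding cofinal_in_def D_def by blast
  qed
  then have cof: "\<forall>j\<in>B0 \<times> UNIV \<times> UNIV. cofinal_in (finite_colourings A) (D j)" by blast
  have empty: "{} \<in> finite_colourings A" unfolding finite_colourings_def by simp
  obtain G where G: "G \<subseteq> finite_colourings A" "union_directed G"
      "\<forall>j\<in>B0 \<times> UNIV \<times> UNIV. G \<inter> D j \<noteq> {}"
    using exists_generic_weight_below_mc[OF assms(1) B0
        countable_finite_colourings[OF \<open>countable A\<close>] empty cof]
    by blast
  have sv: "single_valued (\<Union>G)"
    using G(1,2) by (intro single_valued_Union_directed) (auto simp: finite_colourings_def)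
  have "char_point (A \<inter> V) {x \<in> A \<inter> V. (x, m) \<in> \<Union>G} \<notin> N (A \<inter> V) n"
    if "V \<in> B0" "A \<inter> V \<noteq> {}" for V m n
  proof -
    obtain s where "s \<in> G" "s \<in> D (V, m, n)" using G(3) \<open>V \<in> B0\<close> by blast
    then show ?thesis
      using char_point_in_colour_cylinder[OF sv, of s "A \<inter> V" m] \<open>A \<inter> V \<noteq> {}\<close>
      unfolding D_def by blast
  qed
  with sv show ?thesis by blast
qed

definition colour_class :: "'a set \<Rightarrow> ('a \<times> nat) set \<Rightarrow> nat \<Rightarrow> 'a set" where
  "colour_class A R m = {x \<in> A. (x, m) \<in> R \<or> (m = 0 \<and> x \<notin> Domain R)}"

lemma Union_colour_class: "(\<Union>m. colour_class A R m) = A"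
  unfolding colour_class_def by blast

lemma colour_class_disjoint:
  assumes "single_valued R" "m \<noteq> n"
  shows "colour_class A R m \<inter> colour_class A R n = {}"
proof -
  have "(x, k) \<in> R \<Longrightarrow> (x, l) \<in> R \<Longrightarrow> k = l" for x k l
    using assms(1) unfolding single_valued_def by blast
  then show ?thesis using assms(2) unfolding colour_class_def by blast
qed

lemma ideal_top_crowded_dense_if_positive_on_base:
  assumes I: "is_ideal_on X I" and B: "is_base_of T B" and "C \<subseteq> A" "A \<subseteq> topspace T"
    and pos: "\<And>V. V \<in> B \<Longrightarrow> A \<inter> V \<noteq> {} \<Longrightarrow> C \<inter> V \<notin> I"
  shows "ideal_top_crowded I T C \<and> A \<subseteq> T closure_of C"
proof -
  have pos_open: "C \<inter> U \<notin> I" if U: "openin T U" "x \<in> U" and "x \<in> A" for U x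
  proof
    assume "C \<inter> U \<in> I"
    obtain V where "V \<in> B" "x \<in> V" "V \<subseteq> U"
      using B U unfolding is_base_of_iff by blast
    then have "C \<inter> V \<in> I" using is_ideal_on_subset[OF I \<open>C \<inter> U \<in> I\<close>] by blast
    then show False using pos \<open>V \<in> B\<close> \<open>x \<in> V\<close> \<open>x \<in> A\<close> by blast
  qed
  have "{} \<in> I" using I unfolding is_ideal_on_def by blast
  have "ideal_top_crowded I T C"
    unfolding ideal_top_crowded_def
  proof (intro allI impI)
    fix U assume "openin T U"
    then show "C \<inter> U = {} \<or> C \<inter> U \<notin> I" using pos_open \<open>C \<subseteq> A\<close> by blast
  qed
  moreover have "A \<subseteq> T closure_of C"
  proof
    fix x assume "x \<in> A"
    have "C \<inter> U \<noteq> {}" if "openin T U" "x \<in> U" for U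
      using pos_open[OF that \<open>x \<in> A\<close>] \<open>{} \<in> I\<close> by auto
    then show "x \<in> T closure_of C"
      using \<open>x \<in> A\<close> \<open>A \<subseteq> topspace T\<close> unfolding in_closure_of by blast
  qed
  ultimately show ?thesis ..
qed

lemma hereditarily_meager_covers:
  fixes I :: "'a set set"
  assumes "hereditarily_meager X I"
  obtains N :: "'a set \<Rightarrow> nat \<Rightarrow> ('a \<Rightarrow> bool) set" where
    "\<And>B n. B \<subseteq> X \<Longrightarrow> B \<notin> I \<Longrightarrow> nowhere_dense_in (cantor_cube B) (N B n)"
    "\<And>B. B \<subseteq> X \<Longrightarrow> B \<notin> I \<Longrightarrow> char_point B ` (I \<inter> Pow B) \<subseteq> (\<Union>n. N B n)"
proof -
  have "\<forall>B. \<exists>N. B \<subseteq> X \<and> B \<notin> I \<longrightarrow> (\<forall>n::nat. nowhere_dense_in (cantor_cube B) (N n)) \<and>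
                                       char_point B ` (I \<inter> Pow B) \<subseteq> (\<Union>n. N n)"
    using assms unfolding hereditarily_meager_def meager_in_def by (simp del: Pow_Int_eq)
  then obtain N where N: "\<forall>B. B \<subseteq> X \<and> B \<notin> I \<longrightarrow> (\<forall>n::nat. nowhere_dense_in (cantor_cube B) (N B n)) \<and>
                                       char_point B ` (I \<inter> Pow B) \<subseteq> (\<Union>n. N B n)"
    by (rule choice[THEN exE])
  show thesis
  proof (rule that)
    fix B n assume "B \<subseteq> X" "B \<notin> I"
    then show "nowhere_dense_in (cantor_cube B) (N B n)"
      and "char_point B ` (I \<inter> Pow B) \<subseteq> (\<Union>n. N B n)" using N by simp_all
  qed
qed

lemma exists_colouring_positive_on_base:
  fixes T :: "'a topology" and I :: "'a set set"
  assumes I: "is_ideal_on X I" and "hereditarily_meager X I" and "weight_below_mc T"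
    and B0: "is_base_of T B0" "\<And>B. is_base_of T B \<Longrightarrow> |B0| \<le>o |B|"
    and "countable A" "A \<subseteq> X" and pos: "\<And>V. V \<in> B0 \<Longrightarrow> A \<inter> V \<noteq> {} \<Longrightarrow> A \<inter> V \<notin> I"
  shows "\<exists>R. single_valued R \<and> (\<forall>V\<in>B0. A \<inter> V \<noteq> {} \<longrightarrow> (\<forall>m. colour_class A R m \<inter> V \<notin> I))"
proof -
  obtain N :: "'a set \<Rightarrow> nat \<Rightarrow> ('a \<Rightarrow> bool) set" where
    N: "\<And>B n. B \<subseteq> X \<Longrightarrow> B \<notin> I \<Longrightarrow> nowhere_dense_in (cantor_cube B) (N B n)"
       "\<And>B. B \<subseteq> X \<Longrightarrow> B \<notin> I \<Longrightarrow> char_point B ` (I \<inter> Pow B) \<subseteq> (\<Union>n. N B n)"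
    by (rule hereditarily_meager_covers[OF assms(2)]) blast
  have AV: "A \<inter> V \<subseteq> X" for V using \<open>A \<subseteq> X\<close> by blast
  have nowhere_dense: "nowhere_dense_in (cantor_cube (A \<inter> V)) (N (A \<inter> V) n)"
    if "V \<in> B0" "A \<inter> V \<noteq> {}" for V n
    using N(1)[OF AV pos[OF that]] .
  obtain R :: "('a \<times> nat) set" where R: "single_valued R" "\<forall>V\<in>B0. A \<inter> V \<noteq> {} \<longrightarrow>
      (\<forall>m n. char_point (A \<inter> V) {x \<in> A \<inter> V. (x, m) \<in> R} \<notin> N (A \<inter> V) n)"
    using exists_generic_colouring[where N = N, OF assms(3) B0 \<open>countable A\<close> nowhere_dense]
    by blast
  have "colour_class A R m \<inter> V \<notin> I" if V: "V \<in> B0" "A \<inter> V \<noteq> {}" for V m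
  proof
    assume "colour_class A R m \<inter> V \<in> I"
    moreover have "{x \<in> A \<inter> V. (x, m) \<in> R} \<subseteq> colour_class A R m \<inter> V"
      unfolding colour_class_def by blast
    ultimately have "{x \<in> A \<inter> V. (x, m) \<in> R} \<in> I \<inter> Pow (A \<inter> V)"
      using is_ideal_on_subset[OF I] by blast
    then obtain n where "char_point (A \<inter> V) {x \<in> A \<inter> V. (x, m) \<in> R} \<in> N (A \<inter> V) n"
      using N(2)[OF AV pos[OF V]] by blast
    then show False using R(2) V by blast
  qed
  with R(1) show ?thesis by blast
qed

theorem mainTheorem2:
  fixes X :: "'a set" and I :: "'a set set" and T :: "'a topology" and A :: "'a set"
  assumes "countable X" and "infinite X"
    and "is_ideal_on X I"
    and "hereditarily_meager X I"
    and "topspace T = X"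
    and "ideal_crowded_topology I T"
    and "weight_below_mc T"
    and "A \<subseteq> X"
    and "ideal_top_crowded I T A"
  shows "\<exists>As :: nat \<Rightarrow> 'a set.
           (\<Union>m. As m) = A \<and>
           (\<forall>m n. m \<noteq> n \<longrightarrow> As m \<inter> As n = {}) \<and>
           (\<forall>m. ideal_top_crowded I T (As m) \<and> A \<subseteq> T closure_of (As m))"
proof -
  obtain B0 where B0: "is_base_of T B0" "\<And>B. is_base_of T B \<Longrightarrow> |B0| \<le>o |B|"
    using exists_minimal_base by blast
  have positive: "A \<inter> V \<notin> I" if "V \<in> B0" "A \<inter> V \<noteq> {}" for V
  proof -
    have "openin T V" using B0(1) \<open>V \<in> B0\<close> unfolding is_base_of_iff by blast
    then show ?thesis using assms(9) \<open>A \<inter> V \<noteq> {}\<close> unfolding ideal_top_crowded_def by blast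
  qed
  obtain R where R: "single_valued R" "\<forall>V\<in>B0. A \<inter> V \<noteq> {} \<longrightarrow> (\<forall>m. colour_class A R m \<inter> V \<notin> I)"
    using exists_colouring_positive_on_base[OF assms(3,4,7) B0 countable_subset[OF assms(8,1)] assms(8) positive]
    by blast
  have "ideal_top_crowded I T (colour_class A R m) \<and> A \<subseteq> T closure_of (colour_class A R m)" for m
    using R(2) assms(5,8) by (intro ideal_top_crowded_dense_if_positive_on_base[OF assms(3) B0(1)])
      (auto simp: colour_class_def)
  with colour_class_disjoint[OF R(1)] show ?thesis
    by (intro exI[of _ "colour_class A R"]) (simp add: Union_colour_class)
qed

end
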